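(* Let $G$ be an ordered graph, and let $S,T\subseteq E(G)$ with $|S|>|T|$. Then there is an edge $e\in S\setminus T$ with $$\mathrm{h}_{G\setminus T}(e)\ge \min_{f\in S}\mathrm{h}_G(f).$$
   Context: An ordered graph is a finite simple graph $G$ equipped with a total order $\le_G$ on $E(G)$ and a total order $\le^V_G$ on $V(G)$; subgraphs inherit these orders. Let $\mathbb N=\{1,2,\dots\}$. Define $\preceq_{\mathrm{lex}}$ on $\mathbb N\times V(G)$ by $(i,v)\preceq_{\mathrm{lex}}(i',v')$ iff $i<i'$, or $i=i'$ and $v\le^V_G v'$. The height table $\mathrm{HT}(G)$ is a partially filled array indexed by $\mathbb N\times V(G)$, built by going through all $(i,v)$ in $\preceq_{\mathrm{lex}}$-increasing order and setting the entry at $(i,v)$ to be the $\le_G$-largest edge containing $v$ not yet entered into the table (blank if none remain). Every edge is entered exactly once; $\mathrm{ht}_G(e)=(\mathrm{h}_G(e),\mathrm{v}_G(e))$ is the position of $e$, with $\mathrm{h}_G(e)$ its row (height) and $\mathrm{v}_G(e)$ its column. $G\setminus T$ denotes the graph on $V(G)$ with edge set $E(G)\setminus T$. *)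

theory Defs
  imports Main
begin

text \<open>An ordered graph: finite vertex set V (vertex order = the linear order of the
 vertex type 'v), edge set E of 2-element subsets of V, and a total order R on E
 (given as a relation, (f,e) \<in> R meaning f \<le> e).  Subgraphs inherit both orders.\<close>

definition simple_graph :: "'v set \<Rightarrow> 'v set set \<Rightarrow> bool" where
  "simple_graph V E \<longleftrightarrow> finite V \<and> (\<forall>e\<in>E. e \<subseteq> V \<and> card e = 2)"

definition ordered_graph :: "'v set \<Rightarrow> 'v set set \<Rightarrow> ('v set \<times> 'v set) set \<Rightarrow> bool" where
  "ordered_graph V E R \<longleftrightarrow> simple_graph V E \<and> linear_order_on E R"

definition rmax :: "('a \<times> 'a) set \<Rightarrow> 'a set \<Rightarrow> 'a" where
  "rmax R C = (THE e. e \<in> C \<and> (\<forall>f\<in>C. (f, e) \<in> R))"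

text \<open>The state is the set of
 edges not yet entered together with the partial table: edge \<mapsto> position (row, column).\<close>
fun ht_row :: "('v set \<times> 'v set) set \<Rightarrow> nat \<Rightarrow> 'v list \<Rightarrow>
    'v set set \<times> ('v set \<Rightarrow> (nat \<times> 'v) option) \<Rightarrow>
    'v set set \<times> ('v set \<Rightarrow> (nat \<times> 'v) option)" where
  "ht_row R i [] st = st"
| "ht_row R i (v # vs) (Rem, tab) =
     (if {e \<in> Rem. v \<in> e} = {} then ht_row R i vs (Rem, tab)
      else (let e = rmax R {e \<in> Rem. v \<in> e}
            in ht_row R i vs (Rem - {e}, tab(e \<mapsto> (i, v)))))"

fun ht_state :: "'v::linorder set \<Rightarrow> 'v set set \<Rightarrow> ('v set \<times> 'v set) set \<Rightarrow> nat \<Rightarrow>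
    'v set set \<times> ('v set \<Rightarrow> (nat \<times> 'v) option)" where
  "ht_state V E R 0 = (E, Map.empty)"
| "ht_state V E R (Suc n) = ht_row R (Suc n) (sorted_list_of_set V) (ht_state V E R n)"

text \<open>Position ht_G(e) = (h_G(e), v_G(e)) of the edge e in the height table.\<close>
definition ht :: "'v::linorder set \<Rightarrow> 'v set set \<Rightarrow> ('v set \<times> 'v set) set \<Rightarrow> 'v set \<Rightarrow> nat \<times> 'v" where
  "ht V E R e = (THE p. \<exists>n. \<forall>m\<ge>n. snd (ht_state V E R m) e = Some p)"

definition height :: "'v::linorder set \<Rightarrow> 'v set set \<Rightarrow> ('v set \<times> 'v set) set \<Rightarrow> 'v set \<Rightarrow> nat" where
  "height V E R e = fst (ht V E R e)"

end

theory Submission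
  imports Defs
begin

text \<open>Let \<open>U\<^sub>F(k)\<close> be the set of edges of \<open>F\<close> not yet entered after the first \<open>k\<close> rows of
  the height table of \<open>F\<close>, so that \<open>h\<^sub>F(e) \<le> k\<close> iff \<open>e \<notin> U\<^sub>F(k)\<close>.  Deleting one edge from the
  graph removes at most one edge from each \<open>U(k)\<close>, hence \<open>U\<^bsub>E-T\<^esub>(k) = U\<^sub>E(k) - Y\<close> with
  \<open>|Y| \<le> |T|\<close>.  For \<open>k = min\<^sub>S h\<^sub>E - 1\<close> we have \<open>S \<subseteq> U\<^sub>E(k)\<close>, and as \<open>|S| > |T|\<close> some
  \<open>e \<in> S\<close> avoids \<open>Y\<close>; then \<open>e \<in> U\<^bsub>E-T\<^esub>(k) \<subseteq> E - T\<close>, so \<open>e \<notin> T\<close> and \<open>h\<^bsub>E-T\<^esub>(e) > k\<close>.\<close>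

lemma linear_order_on_finite_has_max:
  assumes "linear_order_on E R" "finite C" "C \<noteq> {}" "C \<subseteq> E"
  shows "\<exists>e\<in>C. \<forall>f\<in>C. (f, e) \<in> R"
  using assms(2-4)
proof (induction C rule: finite_ne_induct)
  case (singleton x)
  then show ?case
    using assms(1) by (auto simp: order_on_defs refl_on_def)
next
  case (insert x C)
  then obtain e where e: "e \<in> C" "\<forall>f\<in>C. (f, e) \<in> R"
    by auto
  have xE: "x \<in> E" and eE: "e \<in> E"
    using insert.prems e(1) by auto
  show ?case
  proof (cases "(x, e) \<in> R")
    case True
    then show ?thesis
      using e by auto
  next
    case False
    then have "(e, x) \<in> R"
      using assms(1) xE eE unfolding order_on_defs refl_on_def total_on_def by metis
    moreover have "(x, x) \<in> R" "trans R"
      using assms(1) xE by (auto simp: order_on_defs refl_on_def)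
    ultimately show ?thesis
      using e by (auto dest: transD)
  qed
qed

lemma rmax_eqI:
  assumes "antisym R" "e \<in> C" "\<forall>f\<in>C. (f, e) \<in> R"
  shows "rmax R C = e"
  unfolding rmax_def
  by (rule the_equality) (use assms in \<open>auto dest: antisymD\<close>)

lemma rmax_max:
  assumes "linear_order_on E R" "finite C" "C \<noteq> {}" "C \<subseteq> E"
  shows "rmax R C \<in> C" and "\<forall>f\<in>C. (f, rmax R C) \<in> R"
proof -
  obtain e where "e \<in> C" "\<forall>f\<in>C. (f, e) \<in> R"
    using linear_order_on_finite_has_max[OF assms] by blast
  moreover have "antisym R"
    using assms(1) by (simp add: order_on_defs)
  ultimately show "rmax R C \<in> C" "\<forall>f\<in>C. (f, rmax R C) \<in> R"
    by (simp_all add: rmax_eqI)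
qed

lemma rmax_subset:
  assumes "linear_order_on E R" "finite C" "C \<subseteq> E" "C' \<subseteq> C" "rmax R C \<in> C'"
  shows "rmax R C' = rmax R C"
proof (rule rmax_eqI)
  show "antisym R"
    using assms(1) by (simp add: order_on_defs)
  show "\<forall>f\<in>C'. (f, rmax R C) \<in> R"
    using rmax_max(2)[OF assms(1,2) _ assms(3)] assms(4,5) by blast
qed (fact assms(5))

lemma ht_row_Cons_enter:
  fixes R :: "('v set \<times> 'v set) set"
  assumes "{e \<in> Rem. v \<in> e} \<noteq> {}"
  defines "x \<equiv> rmax R {e \<in> Rem. v \<in> e}"
  shows "ht_row R i (v # vs) (Rem, tab) = ht_row R i vs (Rem - {x}, tab(x \<mapsto> (i, v)))"
  using assms(1) unfolding x_def ht_row.simps(2) Let_def by (simp only: if_False)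

lemma fst_ht_row_subset: "fst (ht_row R i vs (Rem, tab)) \<subseteq> Rem"
  by (induction vs arbitrary: Rem tab) (auto simp: Let_def)

lemma snd_ht_row:
  assumes lin: "linear_order_on E R" and "finite Rem" "Rem \<subseteq> E"
  shows "(e \<in> Rem - fst (ht_row R i vs (Rem, tab)) \<longrightarrow> (\<exists>v. snd (ht_row R i vs (Rem, tab)) e = Some (i, v)))
    \<and> (e \<notin> Rem - fst (ht_row R i vs (Rem, tab)) \<longrightarrow> snd (ht_row R i vs (Rem, tab)) e = tab e)"
  using assms(2,3)
proof (induction vs arbitrary: Rem tab)
  case Nil
  then show ?case by simp
next
  case (Cons v vs)
  show ?case
  proof (cases "{e \<in> Rem. v \<in> e} = {}")
    case True
    then show ?thesis
      using Cons by simp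
  next
    case False
    define x where "x = rmax R {e \<in> Rem. v \<in> e}"
    have "x \<in> Rem"
      using rmax_max(1)[OF lin _ False] Cons.prems unfolding x_def by auto
    obtain Rem' tab' where run: "ht_row R i vs (Rem - {x}, tab(x \<mapsto> (i, v))) = (Rem', tab')"
      by fastforce
    have "finite (Rem - {x})" "Rem - {x} \<subseteq> E"
      using Cons.prems by auto
    note IH = Cons.IH[OF this, of "tab(x \<mapsto> (i, v))", unfolded run fst_conv snd_conv]
    have "Rem' \<subseteq> Rem - {x}"
      using fst_ht_row_subset[of R i vs "Rem - {x}"] run by (metis fst_conv)
    then show ?thesis
      unfolding ht_row_Cons_enter[OF False] x_def[symmetric] run fst_conv snd_conv
      using IH \<open>x \<in> Rem\<close> by (cases "e = x") auto
  qed
qed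

lemma fst_ht_row_psubset:
  assumes lin: "linear_order_on E R" and "finite Rem" "Rem \<subseteq> E"
    and "e \<in> Rem" "v \<in> e" "v \<in> set vs"
  shows "fst (ht_row R i vs (Rem, tab)) \<subset> Rem"
  using assms(2-6)
proof (induction vs arbitrary: Rem tab)
  case Nil
  then show ?case by simp
next
  case (Cons w vs)
  show ?case
  proof (cases "{e \<in> Rem. w \<in> e} = {}")
    case True
    then have "v \<in> set vs"
      using Cons.prems by auto
    with True Cons show ?thesis
      by simp
  next
    case False
    define x where "x = rmax R {e \<in> Rem. w \<in> e}"
    have "x \<in> Rem"
      using rmax_max(1)[OF lin _ False] Cons.prems unfolding x_def by auto
    then show ?thesis
      using fst_ht_row_subset[of R i vs "Rem - {x}"]
      unfolding ht_row_Cons_enter[OF False] x_def[symmetric] by auto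
  qed
qed

text \<open>Running a row on \<open>Rem\<close> and on \<open>Rem - {y}\<close> in parallel, both runs enter the same edge
  until the larger one enters \<open>y\<close>; at that vertex the smaller run enters some other edge \<open>z\<close>
  or nothing, after which the two runs are again in the situation \<open>Rem'\<close> versus \<open>Rem' - {z}\<close>.\<close>

lemma fst_ht_row_Diff_singleton:
  assumes lin: "linear_order_on E R" and "finite Rem" "Rem \<subseteq> E"
  shows "\<exists>z. fst (ht_row R i vs (Rem - {y}, tab')) = fst (ht_row R i vs (Rem, tab)) - {z}"
  using assms(2,3)
proof (induction vs arbitrary: Rem y tab tab')
  case Nil
  then show ?case by auto
next
  case (Cons v vs)
  have C': "{e \<in> Rem - {y}. v \<in> e} = {e \<in> Rem. v \<in> e} - {y}"
    by auto
  show ?case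
  proof (cases "{e \<in> Rem. v \<in> e} = {}")
    case True
    then show ?thesis
      using Cons C' by simp
  next
    case False
    define x where "x = rmax R {e \<in> Rem. v \<in> e}"
    have x: "x \<in> Rem" "v \<in> x"
      using rmax_max(1)[OF lin _ False] Cons.prems unfolding x_def by auto
    have IH: "\<exists>z. fst (ht_row R i vs (Rem - {x} - {y'}, tab'')) = fst (ht_row R i vs (Rem - {x}, tab(x \<mapsto> (i, v)))) - {z}"
      for y' tab''
      using Cons.prems by (intro Cons.IH) auto
    note larger = ht_row_Cons_enter[OF False, of R i vs tab, folded x_def]
    consider "x \<noteq> y" | "x = y" "{e \<in> Rem - {y}. v \<in> e} = {}" | "x = y" "{e \<in> Rem - {y}. v \<in> e} \<noteq> {}"
      by blast
    then show ?thesis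
    proof cases
      case 1
      then have ne: "{e \<in> Rem - {y}. v \<in> e} \<noteq> {}"
        using x by auto
      have "rmax R {e \<in> Rem - {y}. v \<in> e} = x"
        unfolding x_def by (rule rmax_subset[OF lin]) (use Cons.prems x 1 in \<open>auto simp: x_def\<close>)
      then have "ht_row R i (v # vs) (Rem - {y}, tab') = ht_row R i vs (Rem - {x} - {y}, tab'(x \<mapsto> (i, v)))"
        using ht_row_Cons_enter[OF ne, of R i vs tab'] by (simp add: insert_commute flip: Diff_insert)
      then show ?thesis
        unfolding larger using IH by metis
    next
      case 2
      then have "Rem - {y} = Rem - {x} - {x}"
        by auto
      moreover have "ht_row R i (v # vs) (Rem - {y}, tab') = ht_row R i vs (Rem - {y}, tab')"
        using 2(2) by simp
      ultimately show ?thesis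
        unfolding larger using IH by metis
    next
      case 3
      then show ?thesis
        unfolding larger ht_row_Cons_enter[OF 3(2)] using Cons.IH[of "Rem - {y}"] Cons.prems by auto
    qed
  qed
qed

definition unentered :: "'v::linorder set \<Rightarrow> 'v set set \<Rightarrow> ('v set \<times> 'v set) set \<Rightarrow> nat \<Rightarrow> 'v set set" where
  "unentered V F R n = fst (ht_state V F R n)"

lemma unentered_0 [simp]: "unentered V F R 0 = F"
  by (simp add: unentered_def)

lemma unentered_Suc:
  "unentered V F R (Suc n) =
    fst (ht_row R (Suc n) (sorted_list_of_set V) (unentered V F R n, snd (ht_state V F R n)))"
  by (simp add: unentered_def)

lemma snd_ht_state_Suc:
  "snd (ht_state V F R (Suc n)) =
    snd (ht_row R (Suc n) (sorted_list_of_set V) (unentered V F R n, snd (ht_state V F R n)))"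
  by (simp add: unentered_def)

lemma unentered_Suc_subset: "unentered V F R (Suc n) \<subseteq> unentered V F R n"
  unfolding unentered_Suc by (rule fst_ht_row_subset)

lemma unentered_subset: "unentered V F R n \<subseteq> F"
  by (induction n) (simp, metis unentered_Suc_subset order_trans)

lemma unentered_antimono: "m \<le> n \<Longrightarrow> unentered V F R n \<subseteq> unentered V F R m"
  using lift_Suc_antimono_le[of "unentered V F R", OF unentered_Suc_subset] by blast

lemma ht_eqI: "\<forall>m\<ge>n. snd (ht_state V F R m) e = Some p \<Longrightarrow> ht V F R e = p"
  unfolding ht_def by (rule the_equality) (auto, metis max.cobounded1 max.cobounded2 option.inject)

context
  fixes V :: "'v::linorder set" and E :: "'v set set" and R :: "('v set \<times> 'v set) set"
  assumes lin: "linear_order_on E R" and finite_V: "finite V"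
    and edges: "\<forall>e\<in>E. e \<subseteq> V \<and> e \<noteq> {}"
begin

lemma finite_edges: "finite E"
  using edges finite_V by (meson Pow_iff finite_Pow_iff finite_subset subsetI)

lemma finite_unentered: "F \<subseteq> E \<Longrightarrow> finite (unentered V F R n)"
  using unentered_subset finite_edges by (meson finite_subset)

lemma snd_ht_state_Suc_entries:
  assumes "F \<subseteq> E"
  shows "(e \<in> unentered V F R n - unentered V F R (Suc n) \<longrightarrow>
      (\<exists>v. snd (ht_state V F R (Suc n)) e = Some (Suc n, v)))
    \<and> (e \<notin> unentered V F R n - unentered V F R (Suc n) \<longrightarrow>
      snd (ht_state V F R (Suc n)) e = snd (ht_state V F R n) e)"
proof -
  have "unentered V F R n \<subseteq> E"
    using unentered_subset assms by (rule subset_trans)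
  then show ?thesis
    unfolding unentered_Suc snd_ht_state_Suc by (rule snd_ht_row[OF lin finite_unentered[OF assms]])
qed

lemma unentered_Suc_psubset:
  assumes "F \<subseteq> E" "unentered V F R n \<noteq> {}"
  shows "unentered V F R (Suc n) \<subset> unentered V F R n"
proof -
  have sub: "unentered V F R n \<subseteq> E"
    using unentered_subset assms(1) by (rule subset_trans)
  then obtain e v where "e \<in> unentered V F R n" "v \<in> e" "v \<in> V"
    using assms(2) edges by blast
  then show ?thesis
    unfolding unentered_Suc using finite_V
    by (intro fst_ht_row_psubset[OF lin finite_unentered[OF assms(1)] sub]) simp_all
qed

lemma unentered_card_le: "F \<subseteq> E \<Longrightarrow> card (unentered V F R n) \<le> card F - n"
proof (induction n)
  case 0
  show ?case by simp
next
  case (Suc n)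
  show ?case
  proof (cases "unentered V F R n = {}")
    case True
    then show ?thesis
      using unentered_Suc_subset[of V F R n] by simp
  next
    case False
    then have "card (unentered V F R (Suc n)) < card (unentered V F R n)"
      using Suc.prems by (intro psubset_card_mono finite_unentered unentered_Suc_psubset)
    then show ?thesis
      using Suc by simp
  qed
qed

lemma unentered_card_eq_empty: "F \<subseteq> E \<Longrightarrow> unentered V F R (card F) = {}"
  using unentered_card_le[of F "card F"] finite_unentered[of F "card F"] by simp

lemma snd_ht_state_stable:
  assumes "F \<subseteq> E" "e \<notin> unentered V F R n" "n \<le> m"
  shows "snd (ht_state V F R m) e = snd (ht_state V F R n) e"
  using assms(3)
proof (induction m rule: dec_induct)
  case base
  then show ?case by simp
next
  case (step m)
  then have "e \<notin> unentered V F R m"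
    using unentered_antimono assms(2) by blast
  then show ?case
    using snd_ht_state_Suc_entries[OF assms(1), of e m] step.IH by auto
qed

lemma height_eq_Suc:
  assumes "F \<subseteq> E" "e \<in> unentered V F R n" "e \<notin> unentered V F R (Suc n)"
  shows "height V F R e = Suc n"
proof -
  obtain v where v: "snd (ht_state V F R (Suc n)) e = Some (Suc n, v)"
    using snd_ht_state_Suc_entries[OF assms(1), of e n] assms(2,3) by blast
  have "ht V F R e = (Suc n, v)"
    using snd_ht_state_stable[OF assms(1,3)] v by (intro ht_eqI) auto
  then show ?thesis
    by (simp add: height_def)
qed

lemma height_le_iff:
  assumes "F \<subseteq> E" "e \<in> F"
  shows "height V F R e \<le> k \<longleftrightarrow> e \<notin> unentered V F R k"
proof -
  have "\<exists>n. e \<in> unentered V F R n \<and> e \<notin> unentered V F R (Suc n)"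
  proof (rule ccontr)
    assume "\<nexists>n. e \<in> unentered V F R n \<and> e \<notin> unentered V F R (Suc n)"
    then have "e \<in> unentered V F R n" for n
      using assms(2) by (induction n) auto
    then show False
      using unentered_card_eq_empty[OF assms(1)] by blast
  qed
  then obtain n where n: "e \<in> unentered V F R n" "e \<notin> unentered V F R (Suc n)"
    by blast
  then show ?thesis
    using height_eq_Suc[OF assms(1) n] unentered_antimono[of "Suc n" k V F R] unentered_antimono[of k n V F R]
    by (cases "Suc n \<le> k") auto
qed

lemma height_pos: "F \<subseteq> E \<Longrightarrow> e \<in> F \<Longrightarrow> 0 < height V F R e"
  using height_le_iff[of F e 0] by simp

lemma subset_unentered_Min_height:
  assumes "F \<subseteq> E" "S \<subseteq> F"
  shows "S \<subseteq> unentered V F R (Min (height V F R ` S) - 1)"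
proof
  fix s assume "s \<in> S"
  have "finite S"
    using finite_subset[OF subset_trans[OF assms(2,1)] finite_edges] .
  obtain f where "f \<in> S" "Min (height V F R ` S) = height V F R f"
    using Min_in[of "height V F R ` S"] \<open>finite S\<close> \<open>s \<in> S\<close> by blast
  then have "0 < Min (height V F R ` S)"
    using height_pos[OF assms(1)] assms(2) by auto
  moreover have "Min (height V F R ` S) \<le> height V F R s"
    using \<open>s \<in> S\<close> \<open>finite S\<close> by simp
  ultimately have "\<not> height V F R s \<le> Min (height V F R ` S) - 1"
    by linarith
  moreover have "s \<in> F"
    using \<open>s \<in> S\<close> assms(2) by blast
  ultimately show "s \<in> unentered V F R (Min (height V F R ` S) - 1)"
    using height_le_iff[OF assms(1)] by blast
qed

lemma unentered_Diff_singleton: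
  assumes "F \<subseteq> E"
  shows "\<exists>y. unentered V (F - {t}) R k = unentered V F R k - {y}"
proof (induction k)
  case 0
  show ?case by auto
next
  case (Suc k)
  then obtain y where y: "unentered V (F - {t}) R k = unentered V F R k - {y}"
    by blast
  have "unentered V F R k \<subseteq> E"
    using assms unentered_subset by blast
  then show ?case
    unfolding unentered_Suc y by (rule fst_ht_row_Diff_singleton[OF lin finite_unentered[OF assms]])
qed

lemma unentered_Diff:
  assumes "F \<subseteq> E" "finite T"
  shows "\<exists>Y. finite Y \<and> card Y \<le> card T \<and> unentered V (F - T) R k = unentered V F R k - Y"
  using assms(2)
proof (induction T rule: finite_induct)
  case empty
  show ?case
    by (intro exI[of _ "{}"]) simp
next
  case (insert t T)
  then obtain Y where Y: "finite Y" "card Y \<le> card T" "unentered V (F - T) R k = unentered V F R k - Y"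
    by blast
  obtain y where "unentered V (F - T - {t}) R k = unentered V (F - T) R k - {y}"
    using unentered_Diff_singleton[of "F - T" t k] assms(1) by blast
  moreover have "F - T - {t} = F - insert t T" "unentered V F R k - Y - {y} = unentered V F R k - insert y Y"
    by auto
  ultimately have "unentered V (F - insert t T) R k = unentered V F R k - insert y Y"
    using Y(3) by simp
  moreover have "finite (insert y Y)" "card (insert y Y) \<le> card (insert t T)"
    using Y(1,2) insert(1,2) by (simp_all add: card_insert_if)
  ultimately show ?case
    by blast
qed

end

lemma ordered_graphD:
  assumes "ordered_graph V E R"
  shows "linear_order_on E R" "finite V" "\<forall>e\<in>E. e \<subseteq> V \<and> e \<noteq> {}"
  using assms by (auto simp: ordered_graph_def simple_graph_def)

theorem lemma3p2:
  fixes V :: "'v::linorder set" and E S T :: "'v set set"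
    and R :: "('v set \<times> 'v set) set"
  assumes "ordered_graph V E R"
    and "S \<subseteq> E" and "T \<subseteq> E"
    and "card S > card T"
  shows "\<exists>e\<in>S - T. height V (E - T) R e \<ge> Min (height V E R ` S)"
proof -
  note graph = ordered_graphD[OF assms(1)]
  have "finite T"
    using finite_edges[OF graph] assms(3) finite_subset by blast
  define k where "k = Min (height V E R ` S) - 1"
  obtain Y where Y: "finite Y" "card Y \<le> card T" "unentered V (E - T) R k = unentered V E R k - Y"
    using unentered_Diff[OF graph subset_refl \<open>finite T\<close>] by blast
  have "S \<subseteq> unentered V E R k"
    unfolding k_def by (rule subset_unentered_Min_height[OF graph subset_refl assms(2)])
  then have "S - Y \<subseteq> unentered V (E - T) R k"
    unfolding Y(3) by blast
  moreover have "\<not> S \<subseteq> Y"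
    using card_mono[OF Y(1)] Y(2) assms(4) by (meson le_trans not_le)
  ultimately obtain e where e: "e \<in> S" "e \<in> unentered V (E - T) R k"
    by blast
  then have "e \<in> E - T"
    using unentered_subset by blast
  then have "\<not> height V (E - T) R e \<le> k"
    using height_le_iff[OF graph Diff_subset \<open>e \<in> E - T\<close>] e(2) by blast
  then have "Min (height V E R ` S) \<le> height V (E - T) R e"
    unfolding k_def by linarith
  then show ?thesis
    using e(1) \<open>e \<in> E - T\<close> by blast
qed

end
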